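(* Let $k$ be an even positive integer and $\ell$ an even positive integer. Then, as formal power series in $t$, \[ \sum_{c\ge0}\operatorname{re}_k(\ell,c)\frac{t^c}{c!}=\cosh\Big(\sum_{g\in G_k(\ell)}\frac{\ell^{g-1}}{g}t^g\Big),\qquad \sum_{c\ge0}\operatorname{ro}_k(\ell,c)\frac{t^c}{c!}=\sinh\Big(\sum_{g\in G_k(\ell)}\frac{\ell^{g-1}}{g}t^g\Big). \]
   Context: $G_k(\ell)=\{g\in\mathbb N:\gcd(g\ell,k)=g\}$. A permutation of cycle type $(\ell)^c$ is a permutation of an $\ell c$-element set whose disjoint cycle decomposition consists of exactly $c$ cycles, all of length $\ell$. $\operatorname{re}_k(\ell,c)$ (resp. $\operatorname{ro}_k(\ell,c)$) denotes the number of even (resp. odd) permutations $\tau$ of the same set with $\tau^k=\sigma$, for any fixed $\sigma$ of cycle type $(\ell)^c$. *)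

theory Defs
  imports "HOL-Combinatorics.Combinatorics" "HOL-Computational_Algebra.Formal_Power_Series"
begin

definition G_set :: "nat \<Rightarrow> nat \<Rightarrow> nat set" where
  "G_set k l = {g. gcd (g * l) k = g}"

definition has_cycle_type :: "(nat \<Rightarrow> nat) \<Rightarrow> nat set \<Rightarrow> nat \<Rightarrow> nat \<Rightarrow> bool" where
  "has_cycle_type \<sigma> S l c \<longleftrightarrow> \<sigma> permutes S \<and>
     card {orbit \<sigma> x | x. x \<in> S} = c \<and> (\<forall>x\<in>S. card (orbit \<sigma> x) = l)"

definition ground :: "nat \<Rightarrow> nat \<Rightarrow> nat set" where
  "ground l c = {..<l * c}"

definition std_perm :: "nat \<Rightarrow> nat \<Rightarrow> nat \<Rightarrow> nat" where
  "std_perm l c = (SOME \<sigma>. has_cycle_type \<sigma> (ground l c) l c)"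

definition re :: "nat \<Rightarrow> nat \<Rightarrow> nat \<Rightarrow> nat" where
  "re k l c = card {\<tau>. \<tau> permutes ground l c \<and> \<tau> ^^ k = std_perm l c \<and> evenperm \<tau>}"

definition ro :: "nat \<Rightarrow> nat \<Rightarrow> nat \<Rightarrow> nat" where
  "ro k l c = card {\<tau>. \<tau> permutes ground l c \<and> \<tau> ^^ k = std_perm l c \<and> \<not> evenperm \<tau>}"

definition fps_cosh_ser :: "real fps" where
  "fps_cosh_ser = Abs_fps (\<lambda>n. if even n then 1 / fact n else 0)"

definition fps_sinh_ser :: "real fps" where
  "fps_sinh_ser = Abs_fps (\<lambda>n. if odd n then 1 / fact n else 0)"

definition inner_ser :: "nat \<Rightarrow> nat \<Rightarrow> real fps" where
  "inner_ser k l = Abs_fps (\<lambda>g. if g \<in> G_set k l then real l ^ (g - 1) / real g else 0)"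

end

theory Submission
  imports Defs
begin

text \<open>
  Let \<sigma> consist of c cycles of length l and fix a point x. If \<tau>^k = \<sigma> and the cycle of \<tau> through x
  has length m, then \<tau>^k splits it into gcd m k cycles of length m / gcd m k, which must be cycles
  of \<sigma>; hence m = g l with gcd (g l) k = g, i.e. g \<in> G_k(l). The cycle is determined by x and the
  points \<tau> x, ..., \<tau>^(g-1) x, which lie in the g - 1 other \<sigma>-cycles it meets; there are
  l^(g-1) (c-1)! / (c-g)! such choices, and conversely each choice yields a k-th root of \<sigma> on the
  union of these cycles. Off that union \<tau> is an arbitrary k-th root of the remaining c - g cycles,
  and since l is even, a cycle of length g l is odd, so the parity flips. For the exponential
  generating functions X and Y of the even and odd roots and f = \<Sum>g\<in>G_k(l). l^(g-1) t^g / g this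
  recursion reads X' = f' Y and Y' = f' X, whose unique solution with X(0) = 1 and Y(0) = 0 is
  X = cosh \<circ> f and Y = sinh \<circ> f.
\<close>

section \<open>A coupled system of differential equations for power series\<close>

lemma fps_coupled_ode_unique:
  fixes X Y X' Y' h :: "'a::field_char_0 fps"
  assumes "fps_deriv X = h * Y" "fps_deriv Y = h * X"
    and "fps_deriv X' = h * Y'" "fps_deriv Y' = h * X'"
    and "fps_nth X 0 = fps_nth X' 0" "fps_nth Y 0 = fps_nth Y' 0"
  shows "X = X'" "Y = Y'"
proof -
  have "\<forall>m\<le>n. fps_nth X m = fps_nth X' m \<and> fps_nth Y m = fps_nth Y' m" for n
  proof (induction n)
    case 0
    then show ?case using assms(5,6) by auto
  next
    case (Suc n)
    then have "fps_nth (h * Y) n = fps_nth (h * Y') n" "fps_nth (h * X) n = fps_nth (h * X') n"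
      by (auto simp: fps_mult_nth intro!: sum.cong)
    then have "fps_nth (fps_deriv X) n = fps_nth (fps_deriv X') n"
      "fps_nth (fps_deriv Y) n = fps_nth (fps_deriv Y') n"
      using assms(1-4) by auto
    then have "fps_nth X (Suc n) = fps_nth X' (Suc n) \<and> fps_nth Y (Suc n) = fps_nth Y' (Suc n)"
      by (simp del: of_nat_Suc)
    then show ?case using Suc by (auto simp: le_Suc_eq)
  qed
  then show "X = X'" "Y = Y'" by (auto simp: fps_eq_iff)
qed

lemma fps_deriv_cosh_ser: "fps_deriv fps_cosh_ser = fps_sinh_ser"
  by (auto simp: fps_eq_iff fps_cosh_ser_def fps_sinh_ser_def fact_Suc field_simps simp del: of_nat_Suc)

lemma fps_deriv_sinh_ser: "fps_deriv fps_sinh_ser = fps_cosh_ser"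
  by (auto simp: fps_eq_iff fps_cosh_ser_def fps_sinh_ser_def fact_Suc field_simps simp del: of_nat_Suc)

lemma cosh_sinh_compose_unique:
  assumes "fps_deriv X = fps_deriv f * Y" "fps_deriv Y = fps_deriv f * X"
    and "fps_nth f 0 = 0" "fps_nth X 0 = 1" "fps_nth Y 0 = 0"
  shows "X = fps_cosh_ser oo f" "Y = fps_sinh_ser oo f"
proof -
  have "fps_deriv (fps_cosh_ser oo f) = fps_deriv f * (fps_sinh_ser oo f)"
    "fps_deriv (fps_sinh_ser oo f) = fps_deriv f * (fps_cosh_ser oo f)"
    by (simp_all add: fps_compose_deriv assms(3) fps_deriv_cosh_ser fps_deriv_sinh_ser mult.commute)
  moreover have "fps_nth (fps_cosh_ser oo f) 0 = 1" "fps_nth (fps_sinh_ser oo f) 0 = 0"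
    by (simp_all add: fps_cosh_ser_def fps_sinh_ser_def)
  ultimately show "X = fps_cosh_ser oo f" "Y = fps_sinh_ser oo f"
    using fps_coupled_ode_unique[OF assms(1,2)] assms(4,5) by metis+
qed

lemma fps_deriv_inner_ser_mult_nth:
  assumes "0 < k"
  shows "fps_nth (fps_deriv (inner_ser k l) * Abs_fps (\<lambda>c. real (B c) / fact c)) n
    = (\<Sum>g\<in>{g\<in>G_set k l. g \<le> Suc n}. real l ^ (g - 1) * real (B (Suc n - g)) / fact (Suc n - g))"
proof -
  have G_Suc_pred: "Suc (g - 1) = g" if "g \<in> G_set k l" for g
    using that assms by (cases g) (auto simp: G_set_def)
  have "fps_nth (fps_deriv (inner_ser k l) * Abs_fps (\<lambda>c. real (B c) / fact c)) n
      = (\<Sum>i\<in>{i\<in>{0..n}. Suc i \<in> G_set k l}. real l ^ i * (real (B (n - i)) / fact (n - i)))"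
    unfolding fps_mult_nth sum.inter_filter[OF finite_atLeastAtMost]
    by (intro sum.cong) (auto simp: inner_ser_def simp del: of_nat_Suc)
  also have "\<dots> = (\<Sum>g\<in>{g\<in>G_set k l. g \<le> Suc n}. real l ^ (g - 1) * real (B (Suc n - g)) / fact (Suc n - g))"
  proof (rule sum.reindex_bij_witness[where i = "\<lambda>g. g - 1" and j = Suc])
    fix g assume "g \<in> {g \<in> G_set k l. g \<le> Suc n}"
    then show "Suc (g - 1) = g" "g - 1 \<in> {i \<in> {0..n}. Suc i \<in> G_set k l}"
      using G_Suc_pred by auto
  qed auto
  finally show ?thesis .
qed

lemma egf_eq_cosh_sinh_compose:
  fixes A B :: "nat \<Rightarrow> nat"
  assumes "0 < k" and "A 0 = 1" "B 0 = 0"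
    and "\<And>n. real (A (Suc n)) / fact n
      = (\<Sum>g\<in>{g\<in>G_set k l. g \<le> Suc n}. real l ^ (g - 1) * real (B (Suc n - g)) / fact (Suc n - g))"
    and "\<And>n. real (B (Suc n)) / fact n
      = (\<Sum>g\<in>{g\<in>G_set k l. g \<le> Suc n}. real l ^ (g - 1) * real (A (Suc n - g)) / fact (Suc n - g))"
  shows "Abs_fps (\<lambda>c. real (A c) / fact c) = fps_cosh_ser oo inner_ser k l"
    "Abs_fps (\<lambda>c. real (B c) / fact c) = fps_sinh_ser oo inner_ser k l"
proof -
  have deriv_egf: "fps_deriv (Abs_fps (\<lambda>c. real (C c) / fact c)) = Abs_fps (\<lambda>n. real (C (Suc n)) / fact n)"
    for C :: "nat \<Rightarrow> nat"
    by (simp add: fps_eq_iff fact_Suc field_simps del: of_nat_Suc)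
  have "fps_deriv (Abs_fps (\<lambda>c. real (A c) / fact c))
      = fps_deriv (inner_ser k l) * Abs_fps (\<lambda>c. real (B c) / fact c)"
    "fps_deriv (Abs_fps (\<lambda>c. real (B c) / fact c))
      = fps_deriv (inner_ser k l) * Abs_fps (\<lambda>c. real (A c) / fact c)"
    by (simp_all add: fps_eq_iff deriv_egf fps_deriv_inner_ser_mult_nth assms)
  moreover have "fps_nth (inner_ser k l) 0 = 0" using assms(1) by (simp add: inner_ser_def G_set_def)
  ultimately show "Abs_fps (\<lambda>c. real (A c) / fact c) = fps_cosh_ser oo inner_ser k l"
    "Abs_fps (\<lambda>c. real (B c) / fact c) = fps_sinh_ser oo inner_ser k l"
    using cosh_sinh_compose_unique assms(2,3) by simp_all
qed

lemma G_set_iff: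
  assumes "0 < k"
  shows "g \<in> G_set k l \<longleftrightarrow> 0 < g \<and> g dvd k \<and> coprime (k div g) l"
proof
  assume "g \<in> G_set k l"
  then have gcd: "gcd (g * l) k = g" by (simp add: G_set_def)
  then have "g dvd k" by (metis gcd_dvd2)
  then obtain k' where k: "k = g * k'" by (rule dvdE)
  have "0 < g" using gcd assms by (cases g) auto
  moreover have "g * gcd l k' = g * 1"
    using gcd by (simp add: k gcd_mult_distrib_nat)
  ultimately show "0 < g \<and> g dvd k \<and> coprime (k div g) l"
    using k by (simp add: coprime_iff_gcd_eq_1 gcd.commute)
next
  assume "0 < g \<and> g dvd k \<and> coprime (k div g) l"
  then obtain k' where "k = g * k'" "coprime k' l" by (auto elim!: dvdE)
  then show "g \<in> G_set k l"
    by (simp add: G_set_def gcd_mult_distrib_nat[symmetric] coprime_iff_gcd_eq_1 gcd.commute)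
qed

lemma dvd_mult_iff_div_gcd_dvd:
  fixes m k j :: nat
  assumes "0 < m"
  shows "m dvd k * j \<longleftrightarrow> m div gcd m k dvd j"
proof -
  define d where "d = gcd m k"
  have "0 < d" using assms by (simp add: d_def)
  have m: "m = d * (m div d)" and k: "k = d * (k div d)" by (simp_all add: d_def)
  have "m dvd k * j \<longleftrightarrow> d * (m div d) dvd d * (k div d * j)"
    using m k by (metis mult.assoc)
  also have "\<dots> \<longleftrightarrow> m div d dvd k div d * j"
    using \<open>0 < d\<close> by simp
  also have "\<dots> \<longleftrightarrow> m div d dvd j"
    using div_gcd_coprime[of m k] assms by (simp add: d_def coprime_dvd_mult_right_iff)
  finally show ?thesis by (simp add: d_def)
qed

lemma mod_mult_cancel_unit:
  fixes a u s t m :: nat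
  assumes "(a * u) mod m = 1" "(u * s) mod m = (u * t) mod m"
  shows "s mod m = t mod m"
proof -
  have "s mod m = (a * u * s) mod m"
    using assms(1) by (metis mod_mult_left_eq mult_1)
  also have "\<dots> = (a * u * t) mod m"
    using assms(2) by (metis mod_mult_right_eq mult.assoc)
  also have "\<dots> = t mod m"
    using assms(1) by (metis mod_mult_left_eq mult_1)
  finally show ?thesis .
qed

lemma card_orbit_eq_least_power:
  assumes "permutation p"
  shows "card (orbit p a) = least_power p a"
proof -
  have "orbit p a = set (support p a)"
    using support_set[OF assms] orbit_altdef_permutation[OF assms] by auto
  then show ?thesis
    using distinct_card[OF cycle_of_permutation[OF assms]] by simp
qed

lemma funpow_eq_funpow_iff_mod_least_power:
  assumes "permutation p"
  shows "(p ^^ i) a = (p ^^ j) a \<longleftrightarrow> i mod least_power p a = j mod least_power p a"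
proof -
  have "(p ^^ i) a = (p ^^ j) a \<longleftrightarrow> i mod least_power p a = j mod least_power p a"
    if "i \<le> j" for i j
  proof -
    have "inj (p ^^ i)"
      using permutation_funpow[OF assms] by (simp add: permutation bij_is_inj)
    moreover have "(p ^^ j) a = (p ^^ i) ((p ^^ (j - i)) a)"
      using that by (simp flip: funpow_add[THEN fun_cong, unfolded comp_def])
    ultimately have "(p ^^ i) a = (p ^^ j) a \<longleftrightarrow> (p ^^ (j - i)) a = a"
      by (metis injD)
    also have "\<dots> \<longleftrightarrow> least_power p a dvd j - i"
      using least_power_dvd[OF assms] by simp
    finally show ?thesis using mod_eq_dvd_iff_nat[OF that] by (simp add: eq_commute)
  qed
  then show ?thesis by (metis nat_le_linear)
qed

lemma least_power_funpow:
  assumes "permutation p"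
  shows "least_power (p ^^ k) a = least_power p a div gcd (least_power p a) k"
proof -
  define m where "m = least_power p a"
  have "0 < m" using least_power_of_permutation(2)[OF assms(1)] by (simp add: m_def)
  have "least_power (p ^^ k) a dvd j \<longleftrightarrow> ((p ^^ k) ^^ j) a = a" for j
    using least_power_dvd[OF permutation_funpow[OF assms(1)]] .
  also have "((p ^^ k) ^^ j) a = a \<longleftrightarrow> m dvd k * j" for j
    using least_power_dvd[OF assms(1)] by (simp add: funpow_mult m_def)
  finally have "least_power (p ^^ k) a dvd j \<longleftrightarrow> m div gcd m k dvd j" for j
    using dvd_mult_iff_div_gcd_dvd[OF \<open>0 < m\<close>] by simp
  then show ?thesis by (metis dvd_antisym dvd_refl m_def)
qed

lemma evenperm_cycle_of_list:
  assumes "distinct cs" "cs \<noteq> []"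
  shows "evenperm (cycle_of_list cs) \<longleftrightarrow> odd (length cs)"
  using assms
proof (induction cs rule: cycle_of_list.induct)
  case (1 i j cs)
  then have "i \<noteq> j" "evenperm (cycle_of_list (j # cs)) \<longleftrightarrow> odd (length (j # cs))"
    by auto
  moreover have "evenperm (cycle_of_list (i # j # cs))
      \<longleftrightarrow> (evenperm (transpose i j) \<longleftrightarrow> evenperm (cycle_of_list (j # cs)))"
    by (simp only: cycle_of_list.simps evenperm_comp[OF permutation_swap_id permutation_of_cycle])
  ultimately show ?case by (simp add: evenperm_swap comp_def)
qed (simp_all add: evenperm_id)

lemma funpow_cycle_of_list_nth:
  assumes "distinct cs" "p < length cs"
  shows "(cycle_of_list cs ^^ j) (cs ! p) = cs ! ((p + j) mod length cs)"
proof -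
  have "(cycle_of_list cs ^^ j) (cs ! p) = map (cycle_of_list cs ^^ j) cs ! p"
    using assms(2) by simp
  also have "\<dots> = cs ! ((p + j) mod length cs)"
    using cyclic_rotation[OF assms(1)] nth_rotate[OF assms(2)] by (simp add: add.commute)
  finally show ?thesis .
qed

lemma perm_restrict_permutes_invariant:
  assumes "bij f" "\<And>z. f z \<in> A \<longleftrightarrow> z \<in> A"
  shows "perm_restrict f A permutes A"
proof (rule bij_imp_permutes)
  have "f ` A = A"
    using assms by (auto simp: image_iff) (metis bij_pointE)
  then have "bij_betw f A A"
    using bij_betw_subset[OF assms(1)] by blast
  then show "bij_betw (perm_restrict f A) A A"
    by (rule bij_betw_cong[THEN iffD1, rotated]) (simp add: perm_restrict_simps)
qed (simp add: perm_restrict_simps)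

lemma comp_commute_disjoint_permutes:
  assumes f: "f permutes A" and g: "g permutes B" and "A \<inter> B = {}"
  shows "f \<circ> g = g \<circ> f"
proof
  fix z
  consider "z \<in> A" | "z \<in> B" | "z \<notin> A" "z \<notin> B" by blast
  then show "(f \<circ> g) z = (g \<circ> f) z"
  proof cases
    case 1
    then have "f z \<in> A" "z \<notin> B" "f z \<notin> B"
      using permutes_in_image[OF f] \<open>A \<inter> B = {}\<close> by auto
    then show ?thesis using permutes_not_in[OF g] by simp
  next
    case 2
    then have "g z \<in> B" "z \<notin> A" "g z \<notin> A"
      using permutes_in_image[OF g] \<open>A \<inter> B = {}\<close> by auto
    then show ?thesis using permutes_not_in[OF f] by simp
  next
    case 3
    then show ?thesis using permutes_not_in[OF f] permutes_not_in[OF g] by simp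
  qed
qed

lemma funpow_comp_commute:
  assumes "f \<circ> g = g \<circ> f"
  shows "(f \<circ> g) ^^ n = f ^^ n \<circ> g ^^ n"
proof -
  have "g (f y) = f (g y)" for y
    using assms by (metis comp_apply)
  then have comm: "g ((f ^^ m) z) = (f ^^ m) (g z)" for m z
    by (induction m) simp_all
  show ?thesis
    by (induction n) (simp_all add: fun_eq_iff comm)
qed

lemma inj_image_subset_mem_iff:
  assumes "inj f" "finite A" "\<And>z. z \<in> A \<Longrightarrow> f z \<in> A"
  shows "f z \<in> A \<longleftrightarrow> z \<in> A"
proof -
  have "f ` A = A"
    using assms inj_on_subset[OF assms(1)] by (intro endo_inj_surj) auto
  then show ?thesis using assms(1) by (metis inj_image_mem_iff)
qed

lemma permutes_split_off:
  assumes \<tau>: "\<tau> permutes S" and \<rho>: "\<rho> permutes A" and "A \<subseteq> S" "finite A"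
    and agree: "\<And>z. z \<in> A \<Longrightarrow> \<tau> z = \<rho> z"
  shows "perm_restrict \<tau> (S - A) permutes S - A" "\<tau> = \<rho> \<circ> perm_restrict \<tau> (S - A)"
proof -
  have "\<tau> z \<in> A" if "z \<in> A" for z
    using agree[OF that] permutes_in_image[OF \<rho>] that by simp
  then have "\<tau> z \<in> A \<longleftrightarrow> z \<in> A" for z
    using \<open>finite A\<close> by (intro inj_image_subset_mem_iff permutes_inj[OF \<tau>]) auto
  then have invariant: "\<tau> z \<in> S - A \<longleftrightarrow> z \<in> S - A" for z
    using permutes_in_image[OF \<tau>] by auto
  then show "perm_restrict \<tau> (S - A) permutes S - A"
    by (rule perm_restrict_permutes_invariant[OF permutes_bij[OF \<tau>]])
  show "\<tau> = \<rho> \<circ> perm_restrict \<tau> (S - A)"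
  proof
    fix z
    consider "z \<in> A" | "z \<in> S - A" | "z \<notin> S"
      by blast
    then show "\<tau> z = (\<rho> \<circ> perm_restrict \<tau> (S - A)) z"
    proof cases
      case 1
      then show ?thesis using agree[OF 1] by (simp add: perm_restrict_simps)
    next
      case 2
      then have "\<tau> z \<notin> A" using invariant[of z] by simp
      then show ?thesis using 2 permutes_not_in[OF \<rho>] by (simp add: perm_restrict_simps)
    next
      case 3
      then have "z \<notin> A" using \<open>A \<subseteq> S\<close> by auto
      then show ?thesis
        using 3 permutes_not_in[OF \<rho>] permutes_not_in[OF \<tau>] by (simp add: perm_restrict_simps)
    qed
  qed
qed

section \<open>Lists of representatives of distinct blocks\<close>

definition transversal_lists :: "('a \<Rightarrow> 'b) \<Rightarrow> 'a set \<Rightarrow> 'a \<Rightarrow> nat \<Rightarrow> 'a list set" where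
  "transversal_lists B S x m = {ys. length ys = m \<and> set ys \<subseteq> S \<and> distinct (map B (x # ys))}"

lemma finite_transversal_lists: "finite S \<Longrightarrow> finite (transversal_lists B S x m)"
  by (rule finite_subset[OF _ finite_lists_length_eq[of S m]]) (auto simp: transversal_lists_def)

lemma transversal_lists_Suc:
  assumes same_block: "\<And>y z. y \<in> S \<Longrightarrow> z \<in> S \<Longrightarrow> z \<in> B y \<longleftrightarrow> B z = B y"
    and x: "x \<in> S"
  shows "transversal_lists B S x (Suc m)
    = (\<Union>y\<in>S - B x. (#) y ` transversal_lists B (S - B y) x m)"
proof (intro set_eqI iffI)
  fix ys assume "ys \<in> transversal_lists B S x (Suc m)"
  then obtain y ys' where ys: "ys = y # ys'" and y: "y \<in> S" and ys': "set ys' \<subseteq> S" "length ys' = m"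
    and d: "distinct (B x # B y # map B ys')"
    by (cases ys) (auto simp: transversal_lists_def)
  have "y \<notin> B x" using same_block[OF x y] d by auto
  moreover have "z \<notin> B y" if "z \<in> set ys'" for z
    using same_block[OF y, of z] that ys' d by (metis distinct.simps(2) image_eqI list.set_map subsetD)
  ultimately have "y \<in> S - B x" "ys' \<in> transversal_lists B (S - B y) x m"
    using y ys' d by (auto simp: transversal_lists_def)
  then show "ys \<in> (\<Union>y\<in>S - B x. (#) y ` transversal_lists B (S - B y) x m)"
    using ys by blast
next
  fix ys assume "ys \<in> (\<Union>y\<in>S - B x. (#) y ` transversal_lists B (S - B y) x m)"
  then obtain y ys' where ys: "ys = y # ys'" and y: "y \<in> S - B x" and ys': "set ys' \<subseteq> S - B y"
    "length ys' = m" and d: "distinct (B x # map B ys')"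
    by (auto simp: transversal_lists_def)
  have "B y \<noteq> B x" using same_block[OF x, of y] y by auto
  moreover have "B y \<notin> B ` set ys'"
    using same_block[of y] y ys'(1) by (smt (verit) Diff_iff image_iff subset_iff)
  ultimately show "ys \<in> transversal_lists B S x (Suc m)"
    using ys y ys' d by (auto simp: transversal_lists_def)
qed

lemma card_transversal_lists_Suc:
  assumes "finite S" "x \<in> S" and same_block: "\<And>y z. y \<in> S \<Longrightarrow> z \<in> S \<Longrightarrow> z \<in> B y \<longleftrightarrow> B z = B y"
  shows "card (transversal_lists B S x (Suc m))
    = (\<Sum>y\<in>S - B x. card (transversal_lists B (S - B y) x m))"
proof -
  have "card (transversal_lists B S x (Suc m))
      = card (\<Union>y\<in>S - B x. (#) y ` transversal_lists B (S - B y) x m)"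
    using transversal_lists_Suc[OF same_block assms(2)] by simp
  also have "\<dots> = (\<Sum>y\<in>S - B x. card ((#) y ` transversal_lists B (S - B y) x m))"
    using assms(1) by (intro card_UN_disjoint) (auto simp: finite_transversal_lists)
  also have "\<dots> = (\<Sum>y\<in>S - B x. card (transversal_lists B (S - B y) x m))"
    by (intro sum.cong refl card_image) simp
  finally show ?thesis .
qed

lemma card_transversal_lists:
  assumes "finite S" "x \<in> S" "card S = l * Suc n"
    and "\<And>y. y \<in> S \<Longrightarrow> y \<in> B y \<and> B y \<subseteq> S \<and> card (B y) = l"
    and "\<And>y z. y \<in> S \<Longrightarrow> z \<in> B y \<Longrightarrow> B z = B y"
  shows "card (transversal_lists B S x m) = (\<Prod>i<m. l * (n - i))"
  using assms
proof (induction m arbitrary: S n)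
  case 0
  have "transversal_lists B S x 0 = {[]}" by (auto simp: transversal_lists_def)
  then show ?case by simp
next
  case (Suc m)
  note IH = Suc.IH and fin = Suc.prems(1) and x = Suc.prems(2) and card_S = Suc.prems(3)
    and block = Suc.prems(4) and block_eq = Suc.prems(5)
  have same_block: "z \<in> B y \<longleftrightarrow> B z = B y" if "y \<in> S" "z \<in> S" for y z
    using block block_eq that by metis
  have card_diff: "card (S - B y) = card S - l" if "y \<in> S" for y
    using block[OF that] fin card_Diff_subset[of "B y" S] finite_subset by metis
  show ?case
  proof (cases n)
    case 0
    then have "card (S - B x) = 0" using card_diff[OF x] card_S by simp
    then have empty: "S - B x = {}" using fin by simp
    show ?thesis
      using card_transversal_lists_Suc[OF fin x same_block, of m] 0
      by (simp only: empty sum.empty) (simp add: prod.lessThan_Suc_shift)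
  next
    case (Suc n')
    have "card (transversal_lists B (S - B y) x m) = (\<Prod>i<m. l * (n' - i))" if y: "y \<in> S - B x" for y
    proof (rule IH)
      show "card (S - B y) = l * Suc n'" using card_diff y card_S Suc by simp
      show "x \<in> S - B y" using y same_block x by auto
      show "z \<in> B z \<and> B z \<subseteq> S - B y \<and> card (B z) = l" if z: "z \<in> S - B y" for z
      proof -
        have "w \<notin> B y" if "w \<in> B z" for w
          using that z y block block_eq same_block by (metis Diff_iff subsetD)
        then show ?thesis using z block by auto
      qed
    qed (use fin block_eq in auto)
    then show ?thesis
      using card_transversal_lists_Suc[OF fin x same_block] card_diff[OF x] card_S Suc
      by (simp add: prod.lessThan_Suc_shift del: prod.lessThan_Suc)
  qed
qed

locale uniform_cycles =
  fixes \<sigma> :: "'a \<Rightarrow> 'a" and S :: "'a set" and l :: nat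
  assumes finite_S: "finite S" and permutes_S: "\<sigma> permutes S"
    and card_orbit: "\<And>z. z \<in> S \<Longrightarrow> card (orbit \<sigma> z) = l"
begin

lemma sigma_permutation: "permutation \<sigma>"
  using finite_S permutes_S permutation_permutes by blast

lemma least_power_eq: "z \<in> S \<Longrightarrow> least_power \<sigma> z = l"
  using card_orbit card_orbit_eq_least_power[OF sigma_permutation] by simp

lemma l_pos: "z \<in> S \<Longrightarrow> 0 < l"
  using least_power_eq least_power_of_permutation(2)[OF sigma_permutation] by metis

lemma funpow_eq_iff: "z \<in> S \<Longrightarrow> (\<sigma> ^^ i) z = (\<sigma> ^^ j) z \<longleftrightarrow> i mod l = j mod l"
  using funpow_eq_funpow_iff_mod_least_power[OF sigma_permutation] least_power_eq by simp

lemma funpow_in_S: "z \<in> S \<Longrightarrow> (\<sigma> ^^ j) z \<in> S"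
  using permutes_in_image[OF permutes_funpow[OF permutes_S]] by simp

lemma orbit_subset: "z \<in> S \<Longrightarrow> orbit \<sigma> z \<subseteq> S"
  by (rule permutes_orbit_subset[OF permutes_S])

lemma orbit_eq_iff: "y \<in> orbit \<sigma> z \<longleftrightarrow> orbit \<sigma> y = orbit \<sigma> z"
proof
  show "y \<in> orbit \<sigma> z \<Longrightarrow> orbit \<sigma> y = orbit \<sigma> z"
    by (rule orbit_cyclic_eq3[OF cyclic_on_orbit'[OF sigma_permutation]])
  show "orbit \<sigma> y = orbit \<sigma> z \<Longrightarrow> y \<in> orbit \<sigma> z"
    using permutation_self_in_orbit[OF sigma_permutation, of y] by simp
qed

lemma orbit_funpow: "orbit \<sigma> ((\<sigma> ^^ j) z) = orbit \<sigma> z"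
  using funpow_in_orbit[OF permutation_self_in_orbit[OF sigma_permutation]] orbit_eq_iff by blast

lemma card_transversal_orbit_lists:
  assumes "x \<in> S" "card S = l * Suc n"
  shows "card (transversal_lists (orbit \<sigma>) S x m) = (\<Prod>i<m. l * (n - i))"
proof (rule card_transversal_lists[OF finite_S assms])
  show "y \<in> orbit \<sigma> y \<and> orbit \<sigma> y \<subseteq> S \<and> card (orbit \<sigma> y) = l" if "y \<in> S" for y
    using that permutation_self_in_orbit[OF sigma_permutation] orbit_subset card_orbit by blast
  show "orbit \<sigma> z = orbit \<sigma> y" if "z \<in> orbit \<sigma> y" for y z
    using that orbit_eq_iff by blast
qed

lemma restrict_complement:
  assumes "\<And>z. \<sigma> z \<in> A \<longleftrightarrow> z \<in> A"
  shows "uniform_cycles (perm_restrict \<sigma> (S - A)) (S - A) l"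
proof
  have invariant: "\<sigma> z \<in> S - A \<longleftrightarrow> z \<in> S - A" for z
    using assms permutes_in_image[OF permutes_S] by blast
  show "finite (S - A)" using finite_S by simp
  show "perm_restrict \<sigma> (S - A) permutes S - A"
    using perm_restrict_permutes_invariant[OF permutes_bij[OF permutes_S] invariant] .
  fix z assume "z \<in> S - A"
  moreover have "\<sigma> \<in> S - A \<rightarrow> S - A" using invariant by blast
  ultimately have "orbit (perm_restrict \<sigma> (S - A)) z = orbit \<sigma> z"
    by (rule orbit_cong0[symmetric]) (simp add: perm_restrict_simps)
  then show "card (orbit (perm_restrict \<sigma> (S - A)) z) = l"
    using card_orbit \<open>z \<in> S - A\<close> by simp
qed

end

lemma uniform_cycles_if_has_cycle_type:
  "finite S \<Longrightarrow> has_cycle_type \<sigma> S l c \<Longrightarrow> uniform_cycles \<sigma> S l"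
  unfolding has_cycle_type_def by unfold_locales auto

section \<open>Decomposing a root along its cycle through a point\<close>

definition perm_roots :: "nat \<Rightarrow> 'a set \<Rightarrow> ('a \<Rightarrow> 'a) \<Rightarrow> bool \<Rightarrow> ('a \<Rightarrow> 'a) set" where
  "perm_roots k S \<sigma> b = {\<tau>. \<tau> permutes S \<and> \<tau> ^^ k = \<sigma> \<and> evenperm \<tau> = b}"

lemma finite_perm_roots: "finite S \<Longrightarrow> finite (perm_roots k S \<sigma> b)"
  by (rule finite_subset[OF _ finite_permutations]) (auto simp: perm_roots_def)

locale root_decomposition = uniform_cycles \<sigma> S l for \<sigma> :: "'a \<Rightarrow> 'a" and S l +
  fixes k n :: nat and x :: 'a
  assumes k_pos: "0 < k" and l_even: "even l" and card_S: "card S = l * Suc n" and x_in_S: "x \<in> S"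
begin

lemma l_gt_1: "1 < l"
  using l_pos[OF x_in_S] l_even by (cases "l = 1") auto

definition admissible :: "nat set" where
  "admissible = {g \<in> G_set k l. g \<le> Suc n}"

definition k_inv :: "nat \<Rightarrow> nat" where
  "k_inv g = (SOME u. (k div g * u) mod l = 1)"

lemma k_inv_mod:
  assumes "g \<in> G_set k l"
  shows "(k div g * k_inv g) mod l = 1"
proof -
  have "0 < g" "g dvd k" "coprime (k div g) l" using assms k_pos by (simp_all add: G_set_iff)
  then have "k div g \<noteq> 0" using k_pos by (auto elim!: dvdE)
  then obtain a b where "k div g * a = l * b + gcd (k div g) l"
    using bezout_nat by blast
  then have "k div g * a = Suc (l * b)"
    using \<open>coprime (k div g) l\<close> by (simp add: coprime_iff_gcd_eq_1)
  then have "(k div g * a) mod l = 1" using mod_Suc_eq[of "l * b" l] l_gt_1 by simp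
  then show ?thesis unfolding k_inv_def by (rule someI)
qed

lemma k_mult_k_inv:
  assumes "g \<in> G_set k l"
  shows "(k * (k_inv g * s)) mod (g * l) = (g * s) mod (g * l)"
proof -
  have "g dvd k" using assms k_pos by (simp add: G_set_iff)
  then have "k * (k_inv g * s) = g * (k div g * k_inv g * s)" by (simp add: mult.assoc)
  also have "(g * (k div g * k_inv g * s)) mod (g * l) = g * ((k div g * k_inv g * s) mod l)"
    by (rule mod_mult_mult1)
  also have "(k div g * k_inv g * s) mod l = s mod l"
    using k_inv_mod[OF assms] mod_mult_left_eq[of "k div g * k_inv g" l s] by simp
  finally show ?thesis by (simp add: mod_mult_mult1)
qed

text \<open>
  If \<tau>^k = \<sigma>, the cycle of \<tau> through x has length g l and ys lists \<tau> x, ..., \<tau>^(g-1) x, then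
  \<tau>^(g s + r) x = \<sigma>^(u s) (\<tau>^r x) with u = k_inv g, because k u \<equiv> g (mod g l). So the cycle is
  determined by \<sigma>, x and ys.
\<close>

definition cycle_list :: "nat \<Rightarrow> 'a list \<Rightarrow> 'a list" where
  "cycle_list g ys = map (\<lambda>p. (\<sigma> ^^ (k_inv g * (p div g))) ((x # ys) ! (p mod g))) [0..<g * l]"

definition cycle_perm :: "nat \<Rightarrow> 'a list \<Rightarrow> 'a \<Rightarrow> 'a" where
  "cycle_perm g ys = cycle_of_list (cycle_list g ys)"

definition outside_cycle :: "nat \<Rightarrow> 'a list \<Rightarrow> 'a set" where
  "outside_cycle g ys = S - set (cycle_list g ys)"

definition roots_with_cycle :: "nat \<Rightarrow> 'a list \<Rightarrow> bool \<Rightarrow> ('a \<Rightarrow> 'a) set" where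
  "roots_with_cycle g ys b =
    {\<tau> \<in> perm_roots k S \<sigma> b. \<forall>z\<in>set (cycle_list g ys). \<tau> z = cycle_perm g ys z}"

lemma admissible_G_set: "g \<in> admissible \<Longrightarrow> g \<in> G_set k l"
  by (simp add: admissible_def)

lemma admissible_pos: "g \<in> admissible \<Longrightarrow> 0 < g"
  using admissible_G_set k_pos by (simp add: G_set_iff)

lemma admissible_dvd: "g \<in> admissible \<Longrightarrow> g dvd k"
  using admissible_G_set k_pos by (simp add: G_set_iff)

context
  fixes g ys
  assumes g: "g \<in> admissible" and ys: "ys \<in> transversal_lists (orbit \<sigma>) S x (g - 1)"
begin

lemma g_pos: "0 < g" using admissible_pos[OF g] .

lemma length_reps: "length (x # ys) = g"
  using ys g_pos by (simp add: transversal_lists_def)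

lemma reps_in_S: "r < g \<Longrightarrow> (x # ys) ! r \<in> S"
  using ys x_in_S length_reps nth_mem[of r "x # ys"] by (auto simp: transversal_lists_def)

lemma reps_orbit_inj:
  assumes "r < g" "r' < g" "orbit \<sigma> ((x # ys) ! r) = orbit \<sigma> ((x # ys) ! r')"
  shows "r = r'"
proof -
  have "distinct (map (orbit \<sigma>) (x # ys))" using ys by (simp add: transversal_lists_def)
  from nth_eq_iff_index_eq[OF this, of r r'] assms length_reps show ?thesis by (simp del: list.map)
qed

lemma length_cycle_list: "length (cycle_list g ys) = g * l"
  by (simp add: cycle_list_def)

lemma nth_cycle_list:
  "p < g * l \<Longrightarrow> cycle_list g ys ! p = (\<sigma> ^^ (k_inv g * (p div g))) ((x # ys) ! (p mod g))"
  by (simp add: cycle_list_def)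

lemma set_cycle_list_subset: "set (cycle_list g ys) \<subseteq> S"
  using funpow_in_S reps_in_S g_pos by (auto simp: cycle_list_def)

lemma distinct_cycle_list: "distinct (cycle_list g ys)"
  unfolding distinct_conv_nth length_cycle_list
proof (intro allI impI)
  fix p q assume pq: "p < g * l" "q < g * l" "p \<noteq> q"
  define z w where "z = (x # ys) ! (p mod g)" and "w = (x # ys) ! (q mod g)"
  have r: "p mod g < g" "q mod g < g" using g_pos by auto
  show "cycle_list g ys ! p \<noteq> cycle_list g ys ! q"
  proof
    assume "cycle_list g ys ! p = cycle_list g ys ! q"
    then have eq: "(\<sigma> ^^ (k_inv g * (p div g))) z = (\<sigma> ^^ (k_inv g * (q div g))) w"
      using pq by (simp add: nth_cycle_list z_def w_def)
    then have "orbit \<sigma> z = orbit \<sigma> w"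
      by (metis orbit_funpow)
    then have mod_eq: "p mod g = q mod g"
      using reps_orbit_inj r by (simp add: z_def w_def)
    then have "z = w" by (simp add: z_def w_def)
    then have "(k_inv g * (p div g)) mod l = (k_inv g * (q div g)) mod l"
      using eq funpow_eq_iff[OF reps_in_S[OF r(1)]] by (simp add: z_def)
    then have "(p div g) mod l = (q div g) mod l"
      by (rule mod_mult_cancel_unit[OF k_inv_mod[OF admissible_G_set[OF g]]])
    moreover have "p div g < l" "q div g < l"
      using pq by (simp_all add: less_mult_imp_div_less mult.commute)
    ultimately have "p div g = q div g" by simp
    then have "p = q"
      using mod_eq div_mult_mod_eq[of p g] div_mult_mod_eq[of q g] by metis
    with pq show False by simp
  qed
qed

lemma card_set_cycle_list: "card (set (cycle_list g ys)) = g * l"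
  using distinct_card[OF distinct_cycle_list] length_cycle_list by simp

lemma cycle_perm_permutes: "cycle_perm g ys permutes set (cycle_list g ys)"
  unfolding cycle_perm_def by (rule cycle_permutes)

lemma funpow_cycle_perm_nth:
  "p < g * l \<Longrightarrow> (cycle_perm g ys ^^ j) (cycle_list g ys ! p) = cycle_list g ys ! ((p + j) mod (g * l))"
  using funpow_cycle_of_list_nth[OF distinct_cycle_list] length_cycle_list by (simp add: cycle_perm_def)

lemma nth_cycle_list_add_k:
  assumes p: "p < g * l"
  shows "cycle_list g ys ! ((p + k) mod (g * l)) = \<sigma> (cycle_list g ys ! p)"
proof -
  define r s where "r = p mod g" and "s = p div g"
  obtain k' where k: "k = g * k'" using admissible_dvd[OF g] by (rule dvdE)
  then have q: "(p + k) mod (g * l) = g * ((s + k div g) mod l) + r"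
    using mod_mult2_eq[of "p + k" g l] g_pos by (simp add: r_def s_def add.commute)
  have "r < g" using g_pos by (simp add: r_def)
  have "(p + k) mod (g * l) < g * l" using g_pos l_gt_1 by simp
  then have "cycle_list g ys ! ((p + k) mod (g * l))
      = (\<sigma> ^^ (k_inv g * ((s + k div g) mod l))) ((x # ys) ! r)"
    using nth_cycle_list[of "(p + k) mod (g * l)"] \<open>r < g\<close> by (simp add: q)
  also have "\<dots> = (\<sigma> ^^ Suc (k_inv g * s)) ((x # ys) ! r)"
  proof -
    have "(k_inv g * ((s + k div g) mod l)) mod l = (k_inv g * s + k div g * k_inv g) mod l"
      by (simp add: mod_mult_right_eq algebra_simps)
    also have "\<dots> = (k_inv g * s + (k div g * k_inv g) mod l) mod l"
      by (simp add: mod_add_right_eq)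
    also have "\<dots> = Suc (k_inv g * s) mod l" using k_inv_mod[OF admissible_G_set[OF g]] by simp
    finally show ?thesis using funpow_eq_iff reps_in_S \<open>r < g\<close> by blast
  qed
  also have "\<dots> = \<sigma> (cycle_list g ys ! p)"
    using nth_cycle_list[OF p] by (simp add: r_def s_def)
  finally show ?thesis .
qed

lemma cycle_perm_power_k: "z \<in> set (cycle_list g ys) \<Longrightarrow> (cycle_perm g ys ^^ k) z = \<sigma> z"
  using nth_cycle_list_add_k funpow_cycle_perm_nth by (auto simp: in_set_conv_nth length_cycle_list)

lemma cycle_perm_odd: "\<not> evenperm (cycle_perm g ys)"
proof -
  have "cycle_list g ys \<noteq> []" using length_cycle_list g_pos l_gt_1 by (auto simp flip: length_greater_0_conv)
  then show ?thesis
    using evenperm_cycle_of_list[OF distinct_cycle_list] length_cycle_list l_even by (simp add: cycle_perm_def)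
qed

lemma sigma_in_cycle_iff: "\<sigma> z \<in> set (cycle_list g ys) \<longleftrightarrow> z \<in> set (cycle_list g ys)"
proof -
  have "\<sigma> z \<in> set (cycle_list g ys)" if "z \<in> set (cycle_list g ys)" for z
    using cycle_perm_power_k[OF that, symmetric] that
      permutes_in_image[OF permutes_funpow[OF cycle_perm_permutes]] by simp
  then show ?thesis by (intro inj_image_subset_mem_iff permutes_inj[OF permutes_S]) auto
qed

lemma uniform_cycles_outside_cycle:
  "uniform_cycles (perm_restrict \<sigma> (outside_cycle g ys)) (outside_cycle g ys) l"
  unfolding outside_cycle_def using sigma_in_cycle_iff by (rule restrict_complement)

lemma card_outside_cycle: "card (outside_cycle g ys) = l * (Suc n - g)"
  using card_Diff_subset[OF _ set_cycle_list_subset] card_set_cycle_list card_S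
  by (simp add: outside_cycle_def diff_mult_distrib2 mult.commute)

lemma power_k_cycle_perm_comp_iff:
  assumes "\<tau> permutes outside_cycle g ys"
  shows "(cycle_perm g ys \<circ> \<tau>) ^^ k = \<sigma> \<longleftrightarrow> \<tau> ^^ k = perm_restrict \<sigma> (outside_cycle g ys)"
proof -
  let ?O = "set (cycle_list g ys)" and ?C = "outside_cycle g ys" and ?\<rho> = "cycle_perm g ys"
  have disj: "?O \<inter> ?C = {}" by (auto simp: outside_cycle_def)
  have \<rho>k: "?\<rho> ^^ k permutes ?O" and \<tau>k: "\<tau> ^^ k permutes ?C"
    using permutes_funpow cycle_perm_permutes assms by blast+
  have pow: "(?\<rho> \<circ> \<tau>) ^^ k = ?\<rho> ^^ k \<circ> \<tau> ^^ k"
    by (rule funpow_comp_commute[OF comp_commute_disjoint_permutes[OF cycle_perm_permutes assms disj]])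
  have "((?\<rho> \<circ> \<tau>) ^^ k) z = \<sigma> z \<longleftrightarrow> (\<tau> ^^ k) z = perm_restrict \<sigma> ?C z" for z
  proof (cases "z \<in> ?O")
    case True
    then have "z \<notin> ?C" using disj by blast
    then show ?thesis
      using pow cycle_perm_power_k[OF True] permutes_not_in[OF \<tau>k] by (simp add: perm_restrict_simps)
  next
    case False
    then have "?\<rho> ^^ k \<circ> \<tau> ^^ k = \<tau> ^^ k \<circ> ?\<rho> ^^ k" "(?\<rho> ^^ k) z = z"
      using comp_commute_disjoint_permutes[OF \<rho>k \<tau>k disj] permutes_not_in[OF \<rho>k] by auto
    moreover have "\<sigma> z = perm_restrict \<sigma> ?C z"
      using False permutes_not_in[OF permutes_S] by (auto simp: perm_restrict_def outside_cycle_def)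
    ultimately show ?thesis using pow by simp
  qed
  then show ?thesis by (auto simp: fun_eq_iff)
qed

lemma evenperm_cycle_perm_comp:
  assumes "\<tau> permutes outside_cycle g ys"
  shows "evenperm (cycle_perm g ys \<circ> \<tau>) \<longleftrightarrow> \<not> evenperm \<tau>"
proof -
  have "permutation \<tau>"
    using assms finite_S permutation_permutes by (auto simp: outside_cycle_def)
  from evenperm_comp[OF permutation_of_cycle this] show ?thesis
    using cycle_perm_odd by (simp add: cycle_perm_def)
qed

lemma roots_with_cycle_eq_image:
  "roots_with_cycle g ys b = (\<lambda>\<tau>. cycle_perm g ys \<circ> \<tau>) `
     perm_roots k (outside_cycle g ys) (perm_restrict \<sigma> (outside_cycle g ys)) (\<not> b)"
  (is "_ = (\<lambda>\<tau>. ?\<rho> \<circ> \<tau>) ` ?R")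
proof (intro set_eqI iffI)
  fix \<tau> assume "\<tau> \<in> roots_with_cycle g ys b"
  then have \<tau>: "\<tau> permutes S" "\<tau> ^^ k = \<sigma>" "evenperm \<tau> = b"
    and agree: "\<And>z. z \<in> set (cycle_list g ys) \<Longrightarrow> \<tau> z = ?\<rho> z"
    by (auto simp: roots_with_cycle_def perm_roots_def)
  note split = permutes_split_off[OF \<tau>(1) cycle_perm_permutes set_cycle_list_subset _ agree,
      folded outside_cycle_def, simplified]
  then have "perm_restrict \<tau> (outside_cycle g ys) \<in> ?R"
    using \<tau> power_k_cycle_perm_comp_iff[OF split(1)] evenperm_cycle_perm_comp[OF split(1)]
    by (auto simp: perm_roots_def)
  then show "\<tau> \<in> (\<lambda>\<tau>. ?\<rho> \<circ> \<tau>) ` ?R" using split(2) by blast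
next
  fix \<tau> assume "\<tau> \<in> (\<lambda>\<tau>. ?\<rho> \<circ> \<tau>) ` ?R"
  then obtain \<tau>' where \<tau>: "\<tau> = ?\<rho> \<circ> \<tau>'" and \<tau>': "\<tau>' permutes outside_cycle g ys"
    "\<tau>' ^^ k = perm_restrict \<sigma> (outside_cycle g ys)" "evenperm \<tau>' = (\<not> b)"
    by (auto simp: perm_roots_def)
  have "\<tau> permutes S"
    unfolding \<tau> using permutes_subset[OF \<tau>'(1)] permutes_subset[OF cycle_perm_permutes set_cycle_list_subset]
    by (auto simp: outside_cycle_def intro: permutes_compose)
  moreover have "\<tau> z = ?\<rho> z" if "z \<in> set (cycle_list g ys)" for z
    using permutes_not_in[OF \<tau>'(1)] that by (simp add: \<tau> outside_cycle_def)
  ultimately show "\<tau> \<in> roots_with_cycle g ys b"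
    using \<tau>' power_k_cycle_perm_comp_iff[OF \<tau>'(1)] evenperm_cycle_perm_comp[OF \<tau>'(1)]
    by (auto simp: roots_with_cycle_def perm_roots_def \<tau>)
qed

lemma card_roots_with_cycle:
  "card (roots_with_cycle g ys b)
    = card (perm_roots k (outside_cycle g ys) (perm_restrict \<sigma> (outside_cycle g ys)) (\<not> b))"
proof -
  have "inj (\<lambda>\<tau>. cycle_perm g ys \<circ> \<tau>)"
  proof (rule injI)
    fix \<tau> \<tau>' assume "cycle_perm g ys \<circ> \<tau> = cycle_perm g ys \<circ> \<tau>'"
    then have "cycle_perm g ys (\<tau> z) = cycle_perm g ys (\<tau>' z)" for z by (metis comp_apply)
    then show "\<tau> = \<tau>'" using permutes_inj[OF cycle_perm_permutes] by (simp add: fun_eq_iff injD)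
  qed
  then show ?thesis
    unfolding roots_with_cycle_eq_image by (metis card_image inj_on_subset subset_UNIV)
qed

lemma cycle_list_nth_0: "cycle_list g ys ! 0 = x"
  using nth_cycle_list[of 0] g_pos l_gt_1 by simp

lemma Suc_less_cycle_length: "i < g - 1 \<Longrightarrow> Suc i < g * l"
  using l_gt_1 by (simp add: less_le_trans[of _ g])

lemma cycle_list_nth_Suc: "i < g - 1 \<Longrightarrow> cycle_list g ys ! Suc i = ys ! i"
  using nth_cycle_list[OF Suc_less_cycle_length] by simp

lemma funpow_root_with_cycle:
  assumes "\<tau> \<in> roots_with_cycle g ys b"
  shows "(\<tau> ^^ j) x = cycle_list g ys ! (j mod (g * l))"
proof -
  have "(\<tau> ^^ j) x = (cycle_perm g ys ^^ j) (cycle_list g ys ! 0)"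
  proof (induction j)
    case (Suc j)
    have "(cycle_perm g ys ^^ j) (cycle_list g ys ! 0) \<in> set (cycle_list g ys)"
      using permutes_in_image[OF permutes_funpow[OF cycle_perm_permutes]] g_pos l_gt_1
      by (simp add: length_cycle_list)
    then show ?case using Suc assms by (simp add: roots_with_cycle_def)
  qed (simp add: cycle_list_nth_0)
  also have "\<dots> = cycle_list g ys ! (j mod (g * l))"
    using funpow_cycle_perm_nth[of 0 j] g_pos l_gt_1 by simp
  finally show ?thesis .
qed

lemma least_power_root_with_cycle:
  assumes \<tau>: "\<tau> \<in> roots_with_cycle g ys b"
  shows "least_power \<tau> x = g * l"
proof -
  have "permutation \<tau>"
    using \<tau> finite_S permutation_permutes by (auto simp: roots_with_cycle_def perm_roots_def)
  have gl: "0 < g * l" using g_pos l_gt_1 by simp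
  have "(\<tau> ^^ j) x = x \<longleftrightarrow> g * l dvd j" for j
  proof -
    have "(\<tau> ^^ j) x = x \<longleftrightarrow> cycle_list g ys ! (j mod (g * l)) = cycle_list g ys ! 0"
      using funpow_root_with_cycle[OF \<tau>] cycle_list_nth_0 by simp
    also have "\<dots> \<longleftrightarrow> j mod (g * l) = 0"
      using nth_eq_iff_index_eq[OF distinct_cycle_list] gl by (simp add: length_cycle_list)
    finally show ?thesis by (simp add: dvd_eq_mod_eq_0)
  qed
  then have "least_power \<tau> x dvd j \<longleftrightarrow> g * l dvd j" for j
    using least_power_dvd[OF \<open>permutation \<tau>\<close>] by simp
  then show ?thesis by (metis dvd_antisym dvd_refl)
qed

lemma funpow_root_with_cycle_reps:
  "\<tau> \<in> roots_with_cycle g ys b \<Longrightarrow> i < g - 1 \<Longrightarrow> (\<tau> ^^ Suc i) x = ys ! i"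
  using funpow_root_with_cycle[of \<tau> b "Suc i"] Suc_less_cycle_length cycle_list_nth_Suc by simp

end

lemma roots_with_cycle_disjoint:
  assumes g: "g \<in> admissible" and ys: "ys \<in> transversal_lists (orbit \<sigma>) S x (g - 1)"
    and g': "g' \<in> admissible" and ys': "ys' \<in> transversal_lists (orbit \<sigma>) S x (g' - 1)"
    and \<tau>: "\<tau> \<in> roots_with_cycle g ys b" and \<tau>': "\<tau> \<in> roots_with_cycle g' ys' b'"
  shows "g = g'" "ys = ys'"
proof -
  show "g = g'"
    using least_power_root_with_cycle[OF g ys \<tau>] least_power_root_with_cycle[OF g' ys' \<tau>'] l_gt_1
    by simp
  have "ys ! i = ys' ! i" if "i < g - 1" for i
    using funpow_root_with_cycle_reps[OF g ys \<tau> that] funpow_root_with_cycle_reps[OF g' ys' \<tau>'] that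
      \<open>g = g'\<close> by simp
  moreover have "length ys = g - 1" "length ys' = g - 1"
    using ys ys' \<open>g = g'\<close> by (simp_all add: transversal_lists_def)
  ultimately show "ys = ys'" by (simp add: nth_equalityI)
qed

definition root_index :: "('a \<Rightarrow> 'a) \<Rightarrow> nat" where
  "root_index \<tau> = gcd (least_power \<tau> x) k"

definition root_reps :: "('a \<Rightarrow> 'a) \<Rightarrow> 'a list" where
  "root_reps \<tau> = map (\<lambda>i. (\<tau> ^^ i) x) [1..<root_index \<tau>]"

context
  fixes \<tau> b
  assumes \<tau>: "\<tau> \<in> perm_roots k S \<sigma> b"
begin

lemma root_permutation: "permutation \<tau>"
  using \<tau> finite_S permutation_permutes by (auto simp: perm_roots_def)

lemma root_cycle_length:
  "least_power \<tau> x = root_index \<tau> * l" "root_index \<tau> \<in> admissible"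
  unfolding root_index_def
proof -
  define m where "m = least_power \<tau> x"
  have "\<tau> ^^ k = \<sigma>" using \<tau> by (simp add: perm_roots_def)
  then have "least_power \<sigma> x = m div gcd m k"
    using least_power_funpow[OF root_permutation, of k x] by (simp add: m_def)
  then have "m div gcd m k = l" using least_power_eq[OF x_in_S] by simp
  then have m: "m = gcd m k * l"
    by (metis dvd_mult_div_cancel gcd_dvd1)
  then show "least_power \<tau> x = gcd (least_power \<tau> x) k * l" by (simp add: m_def)
  have "m \<le> card S"
  proof -
    have "orbit \<tau> x \<subseteq> S" using \<tau> x_in_S by (auto simp: perm_roots_def permutes_orbit_subset)
    then show ?thesis
      using card_orbit_eq_least_power[OF root_permutation] card_mono[OF finite_S] by (metis m_def)
  qed
  then have "gcd m k * l \<le> Suc n * l" using m card_S by (simp add: mult.commute)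
  then have "gcd m k \<le> Suc n" using l_gt_1 mult_le_cancel2[of "gcd m k" l "Suc n"] by linarith
  moreover have "gcd (gcd m k * l) k = gcd m k" using m by simp
  ultimately show "gcd (least_power \<tau> x) k \<in> admissible"
    by (simp add: admissible_def G_set_def m_def)
qed

lemma root_funpow_in_S: "(\<tau> ^^ j) z \<in> S \<longleftrightarrow> z \<in> S"
  using \<tau> permutes_in_image[OF permutes_funpow, of \<tau> S] by (simp add: perm_roots_def)

lemma root_funpow_eq_iff: "(\<tau> ^^ i) x = (\<tau> ^^ j) x \<longleftrightarrow> i mod (root_index \<tau> * l) = j mod (root_index \<tau> * l)"
  using funpow_eq_funpow_iff_mod_least_power[OF root_permutation] root_cycle_length(1) by simp

lemma sigma_funpow_eq_root_funpow: "(\<sigma> ^^ a) ((\<tau> ^^ i) x) = (\<tau> ^^ (k * a + i)) x"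
  using \<tau> by (simp add: perm_roots_def funpow_add flip: funpow_mult)

lemma x_Cons_root_reps: "x # root_reps \<tau> = map (\<lambda>i. (\<tau> ^^ i) x) [0..<root_index \<tau>]"
  using admissible_pos[OF root_cycle_length(2)] by (simp add: root_reps_def upt_conv_Cons)

lemma root_reps_transversal: "root_reps \<tau> \<in> transversal_lists (orbit \<sigma>) S x (root_index \<tau> - 1)"
proof -
  let ?g = "root_index \<tau>"
  have "?g dvd k" using admissible_dvd[OF root_cycle_length(2)] .
  have "inj_on (\<lambda>i. orbit \<sigma> ((\<tau> ^^ i) x)) {0..<?g}"
  proof (rule inj_onI)
    fix i j assume ij: "i \<in> {0..<?g}" "j \<in> {0..<?g}"
      and "orbit \<sigma> ((\<tau> ^^ i) x) = orbit \<sigma> ((\<tau> ^^ j) x)"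
    then have "(\<tau> ^^ j) x \<in> orbit \<sigma> ((\<tau> ^^ i) x)"
      using permutation_self_in_orbit[OF sigma_permutation] by metis
    then obtain a where "(\<tau> ^^ j) x = (\<sigma> ^^ a) ((\<tau> ^^ i) x)"
      using orbit_altdef_permutation[OF sigma_permutation] by blast
    then have "j mod (?g * l) = (k * a + i) mod (?g * l)"
      using root_funpow_eq_iff sigma_funpow_eq_root_funpow by simp
    then have "j mod ?g = (k * a + i) mod ?g"
      by (metis mod_mod_cancel dvd_triv_left)
    also have "\<dots> = i mod ?g"
      using \<open>?g dvd k\<close> mod_add_left_eq[of "k * a" ?g i] by simp
    finally show "i = j" using ij by simp
  qed
  then have "distinct (map (orbit \<sigma>) (x # root_reps \<tau>))"
    by (simp add: x_Cons_root_reps distinct_map comp_def)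
  moreover have "set (root_reps \<tau>) \<subseteq> S"
    using root_funpow_in_S x_in_S by (auto simp: root_reps_def)
  moreover have "length (root_reps \<tau>) = root_index \<tau> - 1" by (simp add: root_reps_def)
  ultimately show ?thesis unfolding transversal_lists_def by blast
qed

lemma root_funpow_eq_cycle_list:
  assumes p: "p < root_index \<tau> * l"
  shows "(\<tau> ^^ p) x = cycle_list (root_index \<tau>) (root_reps \<tau>) ! p"
proof -
  let ?g = "root_index \<tau>"
  define r s where "r = p mod ?g" and "s = p div ?g"
  have g: "?g \<in> admissible" and ys: "root_reps \<tau> \<in> transversal_lists (orbit \<sigma>) S x (?g - 1)"
    using root_cycle_length(2) root_reps_transversal .
  have "r < ?g" using admissible_pos[OF g] by (simp add: r_def)
  then have "cycle_list ?g (root_reps \<tau>) ! p = (\<sigma> ^^ (k_inv ?g * s)) ((\<tau> ^^ r) x)"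
    using nth_cycle_list[OF g ys p] x_Cons_root_reps by (simp add: r_def s_def)
  also have "\<dots> = (\<tau> ^^ (k * (k_inv ?g * s) + r)) x"
    by (rule sigma_funpow_eq_root_funpow)
  also have "\<dots> = (\<tau> ^^ p) x"
  proof -
    have "(k * (k_inv ?g * s) + r) mod (?g * l) = (?g * s + r) mod (?g * l)"
      using k_mult_k_inv[OF admissible_G_set[OF g], of s] by (metis mod_add_left_eq)
    then show ?thesis using root_funpow_eq_iff by (simp add: r_def s_def)
  qed
  finally show ?thesis ..
qed

lemma root_in_roots_with_cycle: "\<tau> \<in> roots_with_cycle (root_index \<tau>) (root_reps \<tau>) b"
proof -
  let ?g = "root_index \<tau>" and ?ys = "root_reps \<tau>"
  have g: "?g \<in> admissible" and ys: "?ys \<in> transversal_lists (orbit \<sigma>) S x (?g - 1)"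
    using root_cycle_length(2) root_reps_transversal .
  have "\<tau> (cycle_list ?g ?ys ! p) = cycle_perm ?g ?ys (cycle_list ?g ?ys ! p)" if p: "p < ?g * l" for p
  proof -
    have "0 < ?g * l" using p by linarith
    then have "Suc p mod (?g * l) < ?g * l" by simp
    have "\<tau> (cycle_list ?g ?ys ! p) = (\<tau> ^^ Suc p) x"
      using root_funpow_eq_cycle_list[OF p] by simp
    also have "\<dots> = (\<tau> ^^ (Suc p mod (?g * l))) x"
      using root_funpow_eq_iff[of "Suc p" "Suc p mod (?g * l)"] by simp
    also have "\<dots> = cycle_list ?g ?ys ! (Suc p mod (?g * l))"
      by (rule root_funpow_eq_cycle_list) fact
    also have "\<dots> = cycle_perm ?g ?ys (cycle_list ?g ?ys ! p)"
      using funpow_cycle_perm_nth[OF g ys p, of 1] by simp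
    finally show ?thesis .
  qed
  then show ?thesis
    using \<tau> by (auto simp: roots_with_cycle_def in_set_conv_nth length_cycle_list[OF g ys])
qed

end

lemma card_perm_roots_decompose:
  "card (perm_roots k S \<sigma> b) = (\<Sum>g\<in>admissible. \<Sum>ys\<in>transversal_lists (orbit \<sigma>) S x (g - 1).
     card (perm_roots k (outside_cycle g ys) (perm_restrict \<sigma> (outside_cycle g ys)) (\<not> b)))"
proof -
  let ?I = "SIGMA g:admissible. transversal_lists (orbit \<sigma>) S x (g - 1)"
  let ?A = "\<lambda>i. roots_with_cycle (fst i) (snd i) b"
  have fin: "finite ?I"
    using finite_transversal_lists[OF finite_S] by (intro finite_SigmaI) (auto simp: admissible_def)
  have "perm_roots k S \<sigma> b = \<Union> (?A ` ?I)"
  proof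
    show "perm_roots k S \<sigma> b \<subseteq> \<Union> (?A ` ?I)"
    proof
      fix \<tau> assume \<tau>: "\<tau> \<in> perm_roots k S \<sigma> b"
      then have "(root_index \<tau>, root_reps \<tau>) \<in> ?I"
        using root_cycle_length(2) root_reps_transversal by blast
      with root_in_roots_with_cycle[OF \<tau>] show "\<tau> \<in> \<Union> (?A ` ?I)" by force
    qed
    show "\<Union> (?A ` ?I) \<subseteq> perm_roots k S \<sigma> b" by (auto simp: roots_with_cycle_def)
  qed
  moreover have "?A i \<inter> ?A j = {}" if "i \<in> ?I" "j \<in> ?I" "i \<noteq> j" for i j
    using that roots_with_cycle_disjoint[of "fst i" "snd i" "fst j" "snd j"] by (auto simp: prod_eq_iff)
  moreover have "finite (?A i)" for i
    using finite_perm_roots[OF finite_S] by (rule finite_subset[rotated]) (auto simp: roots_with_cycle_def)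
  ultimately have "card (perm_roots k S \<sigma> b) = (\<Sum>i\<in>?I. card (?A i))"
    using fin by (simp add: card_UN_disjoint)
  also have "\<dots> = (\<Sum>i\<in>?I.
      card (perm_roots k (outside_cycle (fst i) (snd i)) (perm_restrict \<sigma> (outside_cycle (fst i) (snd i))) (\<not> b)))"
    by (intro sum.cong refl) (auto simp: card_roots_with_cycle)
  also have "\<dots> = (\<Sum>g\<in>admissible. \<Sum>ys\<in>transversal_lists (orbit \<sigma>) S x (g - 1).
     card (perm_roots k (outside_cycle g ys) (perm_restrict \<sigma> (outside_cycle g ys)) (\<not> b)))"
    using finite_transversal_lists[OF finite_S]
    by (subst sum.Sigma) (auto simp: admissible_def split_def)
  finally show ?thesis .
qed

lemma card_perm_roots_recurrence:
  assumes smaller: "\<And>(T :: 'a set) \<tau> j. uniform_cycles \<tau> T l \<Longrightarrow> card T = l * j \<Longrightarrow> j < Suc n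
      \<Longrightarrow> card (perm_roots k T \<tau> (\<not> b)) = N j"
  shows "card (perm_roots k S \<sigma> b) = (\<Sum>g\<in>admissible. (\<Prod>i<g - 1. l * (n - i)) * N (Suc n - g))"
proof -
  have "card (perm_roots k (outside_cycle g ys) (perm_restrict \<sigma> (outside_cycle g ys)) (\<not> b))
      = N (Suc n - g)"
    if "g \<in> admissible" "ys \<in> transversal_lists (orbit \<sigma>) S x (g - 1)" for g ys
    using smaller[OF uniform_cycles_outside_cycle[OF that] card_outside_cycle[OF that]]
      admissible_pos[OF that(1)] by simp
  then show ?thesis
    using card_perm_roots_decompose card_transversal_orbit_lists[OF x_in_S card_S] by simp
qed

end

section \<open>A standard permutation of cycle type (l)^c\<close>

definition block_rotation :: "nat \<Rightarrow> nat \<Rightarrow> nat \<Rightarrow> nat" where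
  "block_rotation l c i = (if i < l * c then l * (i div l) + Suc (i mod l) mod l else i)"

lemma block_offset_less:
  fixes q t l c :: nat
  assumes "q < c" "t < l"
  shows "l * q + t < l * c"
proof -
  have "l * Suc q \<le> l * c" using assms(1) by (intro mult_le_mono2) simp
  then show ?thesis using assms(2) by simp
qed

lemma funpow_block_rotation:
  assumes "0 < l" "i < l * c"
  shows "(block_rotation l c ^^ j) i = l * (i div l) + (i mod l + j) mod l"
proof (induction j)
  case (Suc j)
  define t where "t = (i mod l + j) mod l"
  have "i div l < c" using assms by (simp add: less_mult_imp_div_less mult.commute)
  moreover have "t < l" using assms(1) by (simp add: t_def)
  ultimately have "l * (i div l) + t < l * c" by (rule block_offset_less)
  then show ?case using Suc \<open>t < l\<close>
    by (simp add: block_rotation_def t_def mod_Suc_eq)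
qed simp

lemma block_rotation_permutes:
  assumes "0 < l"
  shows "block_rotation l c permutes {..<l * c}"
proof (rule bij_imp_permutes)
  have maps: "block_rotation l c ` {..<l * c} \<subseteq> {..<l * c}"
    using assms block_offset_less[of "i div l" c "Suc (i mod l) mod l" l for i]
    by (auto simp: block_rotation_def less_mult_imp_div_less mult.commute)
  have "inj_on (block_rotation l c) {..<l * c}"
  proof (rule inj_onI)
    fix i j assume "i \<in> {..<l * c}" "j \<in> {..<l * c}" "block_rotation l c i = block_rotation l c j"
    obtain l' where l: "l = Suc l'" using assms by (cases l) auto
    have "(block_rotation l c ^^ l) i = (block_rotation l c ^^ l') (block_rotation l c i)"
      "(block_rotation l c ^^ l) j = (block_rotation l c ^^ l') (block_rotation l c j)"
      by (simp_all only: l funpow_Suc_right comp_apply)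
    then have "(block_rotation l c ^^ l) i = (block_rotation l c ^^ l) j"
      using \<open>block_rotation l c i = block_rotation l c j\<close> by simp
    then show "i = j" using \<open>i \<in> _\<close> \<open>j \<in> _\<close> assms by (simp add: funpow_block_rotation)
  qed
  then show "bij_betw (block_rotation l c) {..<l * c} {..<l * c}"
    using endo_inj_surj[OF _ maps] by (simp add: bij_betw_def)
qed (simp add: block_rotation_def)

lemma orbit_block_rotation:
  assumes "0 < l" "i < l * c"
  shows "orbit (block_rotation l c) i = {l * (i div l) ..< l * (i div l) + l}"
proof -
  have "permutation (block_rotation l c)"
    using block_rotation_permutes[OF assms(1)] permutation_permutes by blast
  then have "orbit (block_rotation l c) i = {(block_rotation l c ^^ j) i | j. True}"
    by (rule orbit_altdef_permutation)
  also have "\<dots> = {l * (i div l) + (i mod l + j) mod l | j. True}"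
    by (simp add: funpow_block_rotation[OF assms])
  also have "\<dots> = {l * (i div l) ..< l * (i div l) + l}"
  proof (intro set_eqI iffI)
    fix y assume "y \<in> {l * (i div l) ..< l * (i div l) + l}"
    then obtain t where t: "t < l" "y = l * (i div l) + t"
      by (metis atLeastLessThan_iff le_Suc_ex nat_add_left_cancel_less)
    have "i mod l < l" using assms(1) by simp
    then have "i mod l + (t + l - i mod l) = t + l" by simp
    then have "(i mod l + (t + l - i mod l)) mod l = t" using t(1) by simp
    then show "y \<in> {l * (i div l) + (i mod l + j) mod l | j. True}"
      using t(2) by (metis (mono_tags, lifting) mem_Collect_eq)
  qed (use assms(1) in auto)
  finally show ?thesis .
qed

lemma has_cycle_type_block_rotation:
  assumes "0 < l"
  shows "has_cycle_type (block_rotation l c) {..<l * c} l c"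
proof -
  let ?block = "\<lambda>q. {l * q ..< l * q + l}"
  have "{orbit (block_rotation l c) i | i. i \<in> {..<l * c}} = ?block ` {..<c}"
  proof (intro set_eqI iffI)
    fix Y assume "Y \<in> {orbit (block_rotation l c) i | i. i \<in> {..<l * c}}"
    then obtain i where "i < l * c" "Y = ?block (i div l)"
      using orbit_block_rotation[OF assms] by auto
    moreover have "i div l < c" using \<open>i < l * c\<close> by (simp add: less_mult_imp_div_less mult.commute)
    ultimately show "Y \<in> ?block ` {..<c}" by blast
  next
    fix Y assume "Y \<in> ?block ` {..<c}"
    then obtain q where "q < c" "Y = ?block q" by auto
    moreover have "l * q < l * c" using \<open>q < c\<close> assms by simp
    moreover have "orbit (block_rotation l c) (l * q) = ?block q"
      using orbit_block_rotation[OF assms \<open>l * q < l * c\<close>] assms by simp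
    ultimately show "Y \<in> {orbit (block_rotation l c) i | i. i \<in> {..<l * c}}" by auto
  qed
  moreover have "inj_on ?block {..<c}"
  proof (rule inj_onI)
    fix q q' assume eq: "?block q = ?block q'"
    have "l * q \<in> ?block q'" unfolding eq[symmetric] using assms by simp
    moreover have "l * q' \<in> ?block q" unfolding eq using assms by simp
    ultimately show "q = q'" using assms by simp
  qed
  ultimately show ?thesis
    using block_rotation_permutes[OF assms] orbit_block_rotation[OF assms]
    by (simp add: has_cycle_type_def card_image)
qed

lemma uniform_cycles_std_perm:
  assumes "0 < l"
  shows "uniform_cycles (std_perm l c) (ground l c) l"
proof -
  have "has_cycle_type (std_perm l c) (ground l c) l c"
    unfolding std_perm_def
    by (rule someI[of _ "block_rotation l c"]) (simp add: ground_def has_cycle_type_block_rotation assms)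
  then show ?thesis by (rule uniform_cycles_if_has_cycle_type[rotated]) (simp add: ground_def)
qed

lemma std_perm_0: "0 < l \<Longrightarrow> std_perm l 0 = id"
  using uniform_cycles.permutes_S[OF uniform_cycles_std_perm, of l 0]
  by (simp add: ground_def permutes_empty)

section \<open>Counting roots\<close>

text \<open>Stated over nat so that the induction hypothesis also applies to the complements
  inside the standard model.\<close>

lemma card_perm_roots_eq_std:
  fixes S :: "nat set"
  assumes "0 < k" "0 < l" "even l" "uniform_cycles \<sigma> S l" "card S = l * c"
  shows "card (perm_roots k S \<sigma> b) = card (perm_roots k (ground l c) (std_perm l c) b)"
  using assms(4,5)
proof (induction c arbitrary: S \<sigma> b rule: less_induct)
  case (less c)
  interpret S: uniform_cycles \<sigma> S l by (fact less.prems(1))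
  interpret std: uniform_cycles "std_perm l c" "ground l c" l
    by (rule uniform_cycles_std_perm[OF assms(2)])
  show ?case
  proof (cases c)
    case 0
    then have "S = {}" "ground l 0 = {}"
      using less.prems S.finite_S by (simp_all add: ground_def)
    then have "\<sigma> = id" "std_perm l c = id"
      using S.permutes_S std_perm_0[OF assms(2)] 0 by (simp_all add: permutes_empty)
    then show ?thesis using \<open>S = {}\<close> \<open>ground l 0 = {}\<close> 0 by simp
  next
    case (Suc n)
    let ?N = "\<lambda>j. card (perm_roots k (ground l j) (std_perm l j) (\<not> b))"
    obtain x where "x \<in> S" using less.prems(2) Suc assms(2) by fastforce
    have "0 \<in> ground l c" using Suc assms(2) by (simp add: ground_def)
    interpret S: root_decomposition \<sigma> S l k n x
      using \<open>x \<in> S\<close> less.prems Suc assms by unfold_locales auto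
    interpret std: root_decomposition "std_perm l c" "ground l c" l k n 0
      using \<open>0 \<in> ground l c\<close> Suc assms by unfold_locales (auto simp: ground_def)
    have "card (perm_roots k S \<sigma> b) = (\<Sum>g\<in>S.admissible. (\<Prod>i<g - 1. l * (n - i)) * ?N (Suc n - g))"
      by (rule S.card_perm_roots_recurrence) (use less.IH Suc in auto)
    also have "\<dots> = card (perm_roots k (ground l c) (std_perm l c) b)"
      by (rule std.card_perm_roots_recurrence[symmetric]) (use less.IH Suc in auto)
    finally show ?thesis .
  qed
qed

lemma card_std_roots_recurrence:
  assumes "0 < k" "0 < l" "even l"
  shows "card (perm_roots k (ground l (Suc n)) (std_perm l (Suc n)) b)
    = (\<Sum>g\<in>{g \<in> G_set k l. g \<le> Suc n}. (\<Prod>i<g - 1. l * (n - i)) *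
        card (perm_roots k (ground l (Suc n - g)) (std_perm l (Suc n - g)) (\<not> b)))"
proof -
  interpret uniform_cycles "std_perm l (Suc n)" "ground l (Suc n)" l
    by (rule uniform_cycles_std_perm[OF assms(2)])
  interpret root_decomposition "std_perm l (Suc n)" "ground l (Suc n)" l k n 0
    using assms by unfold_locales (auto simp: ground_def)
  show ?thesis
    unfolding admissible_def[symmetric]
    by (rule card_perm_roots_recurrence) (use card_perm_roots_eq_std assms in auto)
qed

lemma falling_product_mult_fact:
  assumes "m \<le> n"
  shows "real (\<Prod>i<m. l * (n - i)) * fact (n - m) = real l ^ m * fact n"
  using assms
proof (induction m)
  case (Suc m)
  then have "fact (n - m) = real (n - m) * fact (n - Suc m)"
    by (metis Suc_diff_Suc Suc_le_lessD fact_Suc)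
  then have "real (\<Prod>i<Suc m. l * (n - i)) * fact (n - Suc m)
      = real l * (real (\<Prod>i<m. l * (n - i)) * fact (n - m))"
    by (simp only: prod.lessThan_Suc of_nat_mult ac_simps)
  also have "\<dots> = real l ^ Suc m * fact n"
    using Suc by (simp only: Suc_leD power_Suc mult.assoc)
  finally show ?case .
qed simp

lemma std_roots_egf_recurrence:
  assumes "0 < k" "0 < l" "even l"
  shows "real (card (perm_roots k (ground l (Suc n)) (std_perm l (Suc n)) b)) / fact n
    = (\<Sum>g\<in>{g \<in> G_set k l. g \<le> Suc n}. real l ^ (g - 1) *
        real (card (perm_roots k (ground l (Suc n - g)) (std_perm l (Suc n - g)) (\<not> b))) / fact (Suc n - g))"
  unfolding card_std_roots_recurrence[OF assms] of_nat_sum sum_divide_distrib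
proof (intro sum.cong refl)
  fix g assume "g \<in> {g \<in> G_set k l. g \<le> Suc n}"
  then have "g - 1 \<le> n" "n - (g - 1) = Suc n - g" "0 < g"
    using assms(1) by (auto simp: G_set_iff)
  then have "real (\<Prod>i<g - 1. l * (n - i)) / fact n = real l ^ (g - 1) / fact (Suc n - g)"
    using falling_product_mult_fact[of "g - 1" n l] by (simp add: field_simps)
  then show "real ((\<Prod>i<g - 1. l * (n - i)) *
        card (perm_roots k (ground l (Suc n - g)) (std_perm l (Suc n - g)) (\<not> b))) / fact n
      = real l ^ (g - 1) *
        real (card (perm_roots k (ground l (Suc n - g)) (std_perm l (Suc n - g)) (\<not> b))) / fact (Suc n - g)"
    by (simp add: field_simps)
qed

theorem mainTheorem7:
  fixes k l :: nat
  assumes "k > 0" "even k" "l > 0" "even l"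
  shows "Abs_fps (\<lambda>c. real (re k l c) / fact c) = fps_cosh_ser oo inner_ser k l
       \<and> Abs_fps (\<lambda>c. real (ro k l c) / fact c) = fps_sinh_ser oo inner_ser k l"
proof -
  have re: "re k l c = card (perm_roots k (ground l c) (std_perm l c) True)"
    and ro: "ro k l c = card (perm_roots k (ground l c) (std_perm l c) False)" for c
    by (simp_all add: re_def ro_def perm_roots_def)
  have "perm_roots k (ground l 0) (std_perm l 0) b = (if b then {id} else {})" for b
    using std_perm_0[OF assms(3)] by (auto simp: ground_def perm_roots_def permutes_empty evenperm_id)
  then have "re k l 0 = 1" "ro k l 0 = 0" by (simp_all add: re ro)
  with egf_eq_cosh_sinh_compose[OF assms(1)] show ?thesis
    using std_roots_egf_recurrence[OF assms(1,3,4)] by (simp add: re ro)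
qed

end
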